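(* Let $j\neq k$ be jobs with $\sigma_j<\sigma_k$ such that $(j,k)$ is not a red pair. Then, in the schedule produced by $1$-SORT, \[ D(j,k)\le\max\left\{\frac{2\mu+1}{\mu+1},\,1+\nu\right\}\cdot D^*(j,k). \]
   Context: Setting: single machine, jobs $J=\{1,\dots,n\}$, each job $j$ with test time $t_j\ge0$ and processing time $p_j\ge0$ (revealed only when the test is executed); each job's test must be executed before its processing part, which may start any time after the test; operations are non-preemptive and the machine does one at a time. $\sigma_j=t_j+p_j$, $m_j=\max\{t_j,p_j\}$. Standing assumption (general position): no two of the $3n$ numbers $t_1,\dots,t_n,p_1,\dots,p_n,\sigma_1,\dots,\sigma_n$ are equal. Algorithm $1$-SORT: keep a priority queue of available operations, initially the test of every job $j$ with priority $t_j$; repeatedly remove a minimum-priority operation and execute it immediately; after executing the test of $j$, insert the processing part of $j$ with priority $p_j$. For a schedule and distinct jobs $j,k$, let $d_{k,j}$ be the total amount of time during which operations (test and/or processing part) of $k$ are executed before the completion time of $j$, and $D(j,k)=d_{j,k}+d_{k,j}$, evaluated for the $1$-SORT schedule. Let $D^*(j,k)=\min\{\sigma_j,\sigma_k\}$ (the corresponding quantity in an optimal schedule). Fix constants $\mu>1$ and $0<\nu<1$ with $\mu\nu>1$ and $1+\frac1\mu\le\nu+\nu^2$. A job $j$ is imbalanced if $m_j\ge\mu\min\{t_j,p_j\}$. For distinct jobs $j,k$, the ordered pair $(j,k)$ is a red pair if $j$ is imbalanced, $m_j\ge t_k\ge\nu m_j$, and $p_k\ge\nu t_k$. *)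

theory Defs
  imports Complex_Main
begin

datatype 'a oper = Test 'a | Proc 'a

fun owner :: "'a oper \<Rightarrow> 'a" where
  "owner (Test j) = j" | "owner (Proc j) = j"

text \<open>Priority (= length) of an operation.\<close>
fun olen :: "('a \<Rightarrow> real) \<Rightarrow> ('a \<Rightarrow> real) \<Rightarrow> 'a oper \<Rightarrow> real" where
  "olen t p (Test j) = t j" | "olen t p (Proc j) = p j"

text \<open>Simulation of 1-SORT: state = (operations executed so far, in order; priority queue).\<close>
primrec sort_run :: "'a set \<Rightarrow> ('a \<Rightarrow> real) \<Rightarrow> ('a \<Rightarrow> real) \<Rightarrow> nat \<Rightarrow> 'a oper list \<times> 'a oper set" where
  "sort_run J t p 0 = ([], Test ` J)"
| "sort_run J t p (Suc i) =
     (let (L, Q) = sort_run J t p i in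
      if Q = {} then (L, Q)
      else let x = (ARG_MIN (olen t p) y. y \<in> Q) in
           (L @ [x], (Q - {x}) \<union> (case x of Test j \<Rightarrow> {Proc j} | Proc j \<Rightarrow> {})))"

text \<open>The 1-SORT schedule: the sequence of operations, executed back to back from time 0.\<close>
definition one_sort :: "'a set \<Rightarrow> ('a \<Rightarrow> real) \<Rightarrow> ('a \<Rightarrow> real) \<Rightarrow> 'a oper list" where
  "one_sort J t p = fst (sort_run J t p (2 * card J))"

text \<open>d_{k,j}: total time operations of k are executed before the completion of j
  (i.e. before the processing part of j ends) in the 1-SORT schedule.\<close>
definition dd :: "'a set \<Rightarrow> ('a \<Rightarrow> real) \<Rightarrow> ('a \<Rightarrow> real) \<Rightarrow> 'a \<Rightarrow> 'a \<Rightarrow> real" where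
  "dd J t p k j = sum_list (map (\<lambda>x. if owner x = k then olen t p x else 0)
                       (takeWhile (\<lambda>x. x \<noteq> Proc j) (one_sort J t p)))"

definition DD :: "'a set \<Rightarrow> ('a \<Rightarrow> real) \<Rightarrow> ('a \<Rightarrow> real) \<Rightarrow> 'a \<Rightarrow> 'a \<Rightarrow> real" where
  "DD J t p j k = dd J t p j k + dd J t p k j"

definition general_position :: "'a set \<Rightarrow> ('a \<Rightarrow> real) \<Rightarrow> ('a \<Rightarrow> real) \<Rightarrow> bool" where
  "general_position J t p \<longleftrightarrow>
     (\<forall>j\<in>J. \<forall>k\<in>J.
        (j \<noteq> k \<longrightarrow> t j \<noteq> t k \<and> p j \<noteq> p k \<and> t j + p j \<noteq> t k + p k) \<and>
        t j \<noteq> p k \<and> t j \<noteq> t k + p k \<and> p j \<noteq> t k + p k)"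

definition imbalanced :: "real \<Rightarrow> ('a \<Rightarrow> real) \<Rightarrow> ('a \<Rightarrow> real) \<Rightarrow> 'a \<Rightarrow> bool" where
  "imbalanced \<mu> t p j \<longleftrightarrow> max (t j) (p j) \<ge> \<mu> * min (t j) (p j)"

definition red_pair :: "real \<Rightarrow> real \<Rightarrow> ('a \<Rightarrow> real) \<Rightarrow> ('a \<Rightarrow> real) \<Rightarrow> 'a \<Rightarrow> 'a \<Rightarrow> bool" where
  "red_pair \<mu> \<nu> t p j k \<longleftrightarrow> j \<noteq> k \<and> imbalanced \<mu> t p j \<and>
     max (t j) (p j) \<ge> t k \<and> t k \<ge> \<nu> * max (t j) (p j) \<and> p k \<ge> \<nu> * t k"

end

theory Submission
  imports Defs
begin

text \<open>1-SORT executes the operations in increasing order of a key: the test of \<open>j\<close> at \<open>t\<^sub>j\<close>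
  and its processing part at \<open>m\<^sub>j = max t\<^sub>j p\<^sub>j\<close>, the latter because it is released only after
  the test. Hence the operations of \<open>k\<close> running before the completion of \<open>j\<close> are the test of
  \<open>k\<close> if \<open>t\<^sub>k < m\<^sub>j\<close> and its processing part if \<open>m\<^sub>k < m\<^sub>j\<close>. If \<open>m\<^sub>j < m\<^sub>k\<close> this gives
  \<open>D(j,k) = \<sigma>\<^sub>j + [t\<^sub>k < m\<^sub>j] t\<^sub>k\<close>, otherwise \<open>D(j,k) = \<sigma>\<^sub>k + [t\<^sub>j < m\<^sub>k] t\<^sub>j\<close>, and in both cases
  \<open>D(j,k) \<le> \<sigma>\<^sub>j + m\<^sub>j\<close>. For a balanced \<open>j\<close> this is at most \<open>(2\<mu>+1)/(\<mu>+1) \<sigma>\<^sub>j\<close>. For an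
  imbalanced \<open>j\<close>, excluding red pairs leaves only configurations in which the operations of
  \<open>k\<close> that delay \<open>j\<close> contribute beyond \<open>\<sigma>\<^sub>j\<close> less than \<open>\<nu> m\<^sub>j \<le> \<nu> \<sigma>\<^sub>j\<close>.\<close>

definition sort_key :: "('a \<Rightarrow> real) \<Rightarrow> ('a \<Rightarrow> real) \<Rightarrow> 'a oper \<Rightarrow> real" where
  "sort_key t p x = (case x of Test j \<Rightarrow> t j | Proc j \<Rightarrow> max (t j) (p j))"

lemma olen_le_sort_key: "olen t p x \<le> sort_key t p x"
  by (cases x) (auto simp: sort_key_def)

definition sort_state_inv ::
    "'a set \<Rightarrow> ('a \<Rightarrow> real) \<Rightarrow> ('a \<Rightarrow> real) \<Rightarrow> 'a oper list \<Rightarrow> 'a oper set \<Rightarrow> bool" where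
  "sort_state_inv J t p L Q \<longleftrightarrow>
     distinct L \<and> set L \<inter> Q = {} \<and> set L \<union> Q \<subseteq> Test ` J \<union> Proc ` J \<and>
     (\<forall>j. Proc j \<in> set L \<union> Q \<longrightarrow> Test j \<in> set L) \<and>
     (\<forall>j\<in>J. Test j \<in> set L \<union> Q \<and> (Proc j \<in> set L \<union> Q \<or> Test j \<in> Q)) \<and>
     sorted (map (sort_key t p) L) \<and> (\<forall>x\<in>set L. \<forall>y\<in>Q. sort_key t p x \<le> sort_key t p y)"

lemma sort_state_inv_step:
  assumes "finite J" and inv: "sort_state_inv J t p L Q" and "Q \<noteq> {}"
    and x_def: "x = (ARG_MIN (olen t p) y. y \<in> Q)"
  shows "sort_state_inv J t p (L @ [x]) (Q - {x} \<union> (case x of Test j \<Rightarrow> {Proc j} | Proc j \<Rightarrow> {}))"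
proof -
  have "finite Q"
    using inv \<open>finite J\<close> unfolding sort_state_inv_def by (meson finite_Un finite_imageI finite_subset le_sup_iff)
  have x_in: "x \<in> Q"
    using arg_min_if_finite(1)[OF \<open>finite Q\<close> \<open>Q \<noteq> {}\<close>] x_def by (simp add: arg_min_on_def)
  have x_min: "\<And>y. y \<in> Q \<Longrightarrow> olen t p x \<le> olen t p y"
    using arg_min_least[OF \<open>finite Q\<close> \<open>Q \<noteq> {}\<close>] x_def by (simp add: arg_min_on_def)
  have L_below_x: "\<And>y. y \<in> set L \<Longrightarrow> sort_key t p y \<le> sort_key t p x"
    using inv x_in unfolding sort_state_inv_def by blast
  show ?thesis
  proof (cases x)
    case (Test i)
    then have "Proc i \<notin> set L" "Proc i \<notin> Q" "i \<in> J"
      using inv x_in unfolding sort_state_inv_def by blast+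
    moreover have "\<And>y. y \<in> Q \<Longrightarrow> t i \<le> sort_key t p y"
      using x_min olen_le_sort_key Test by (metis olen.simps(1) order_trans)
    moreover have "\<And>y. y \<in> set L \<Longrightarrow> sort_key t p y \<le> max (t i) (p i)"
      using L_below_x Test by (metis sort_key_def max.coboundedI1 oper.simps(5))
    ultimately show ?thesis
      using inv x_in L_below_x Test unfolding sort_state_inv_def by (auto simp: sorted_append sort_key_def)
  next
    case (Proc i)
    then have "Test i \<in> set L"
      using inv x_in unfolding sort_state_inv_def by blast
    \<comment> \<open>every operation still queued has key at least \<open>t\<^sub>i\<close> (by the invariant) and at least \<open>p\<^sub>i\<close> (by minimality)\<close>
    then have "sort_key t p x \<le> sort_key t p y" if "y \<in> Q" for y
      using inv that x_min[OF that] olen_le_sort_key[of t p y] Proc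
      unfolding sort_state_inv_def by (auto simp: sort_key_def)
    then show ?thesis
      using inv x_in L_below_x Proc unfolding sort_state_inv_def by (auto simp: sorted_append)
  qed
qed

lemma sort_state_inv_sort_run:
  assumes "finite J"
  shows "sort_state_inv J t p (fst (sort_run J t p i)) (snd (sort_run J t p i))"
proof (induction i)
  case 0
  show ?case by (auto simp: sort_state_inv_def)
next
  case (Suc i)
  obtain L Q where "sort_run J t p i = (L, Q)" by force
  then show ?case
    using Suc sort_state_inv_step[OF assms, of t p L Q] by (auto simp: Let_def)
qed

lemma length_sort_run: "snd (sort_run J t p i) \<noteq> {} \<Longrightarrow> length (fst (sort_run J t p i)) = i"
proof (induction i)
  case (Suc i)
  obtain L Q where "sort_run J t p i = (L, Q)" by force
  then show ?case using Suc by (auto simp: Let_def split: if_splits)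
qed simp

lemma sort_state_inv_one_sort:
  assumes "finite J"
  shows "sort_state_inv J t p (one_sort J t p) {}"
proof -
  let ?S = "sort_run J t p (2 * card J)"
  have inv: "sort_state_inv J t p (fst ?S) (snd ?S)"
    using sort_state_inv_sort_run[OF assms] .
  have "snd ?S = {}"
  proof (rule ccontr)
    assume queued: "snd ?S \<noteq> {}"
    have "card (Test ` J \<union> Proc ` J) = 2 * card J"
      using assms by (subst card_Un_disjoint) (auto simp: card_image inj_on_def)
    also have "\<dots> = card (set (fst ?S))"
      using inv length_sort_run[OF queued] unfolding sort_state_inv_def by (simp add: distinct_card)
    finally have "set (fst ?S) = Test ` J \<union> Proc ` J"
      using inv assms unfolding sort_state_inv_def by (intro card_subset_eq) auto
    then show False using inv queued unfolding sort_state_inv_def by blast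
  qed
  then show ?thesis using inv unfolding one_sort_def by simp
qed

lemma mem_takeWhile_neq_iff_less:
  fixes f :: "'a \<Rightarrow> 'b::linorder"
  assumes "sorted (map f xs)" and "y \<in> set xs" and "x \<in> set xs" and "f x \<noteq> f y"
  shows "x \<in> set (takeWhile (\<lambda>z. z \<noteq> y) xs) \<longleftrightarrow> f x < f y"
proof -
  obtain as bs where xs: "xs = as @ y # bs" and "y \<notin> set as"
    using split_list_first[OF \<open>y \<in> set xs\<close>] by blast
  have "takeWhile (\<lambda>z. z \<noteq> y) xs = as"
    unfolding xs using \<open>y \<notin> set as\<close> by (induction as) auto
  moreover have "x \<in> set as \<or> x \<in> set bs" using assms(3,4) xs by auto
  moreover have "x \<in> set as \<Longrightarrow> f x \<le> f y" "x \<in> set bs \<Longrightarrow> f y \<le> f x"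
    using assms(1) xs by (auto simp: sorted_append)
  ultimately show ?thesis using assms(4) by auto
qed

lemma dd_eq:
  assumes "finite J" and "general_position J t p" and "j \<in> J" "k \<in> J" "j \<noteq> k"
  shows "dd J t p k j = (if t k < max (t j) (p j) then t k else 0)
                      + (if max (t k) (p k) < max (t j) (p j) then p k else 0)"
proof -
  let ?L = "one_sort J t p"
  let ?A = "takeWhile (\<lambda>x. x \<noteq> Proc j) ?L"
  have inv: "sort_state_inv J t p ?L {}" using sort_state_inv_one_sort[OF assms(1)] .
  then have ops: "Test i \<in> set ?L" "Proc i \<in> set ?L" if "i \<in> J" for i
    using that unfolding sort_state_inv_def by auto
  have "distinct ?A" "sorted (map (sort_key t p) ?L)"
    using inv unfolding sort_state_inv_def by auto
  have gp: "t k \<noteq> t j" "t k \<noteq> p j" "p k \<noteq> t j" "p k \<noteq> p j"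
    using assms(2-5) unfolding general_position_def by metis+
  have "(if owner x = k then olen t p x else 0) =
        (if x = Test k then t k else 0) + (if x = Proc k then p k else 0)" for x
    by (cases x) auto
  then have "dd J t p k j = (\<Sum>x\<leftarrow>?A. if x = Test k then t k else 0) + (\<Sum>x\<leftarrow>?A. if x = Proc k then p k else 0)"
    unfolding dd_def by (simp add: sum_list_addf)
  also have "\<dots> = (if Test k \<in> set ?A then t k else 0) + (if Proc k \<in> set ?A then p k else 0)"
    using \<open>distinct ?A\<close> by (simp add: sum_list_distinct_conv_sum_set)
  also have "Test k \<in> set ?A \<longleftrightarrow> t k < max (t j) (p j)"
    using mem_takeWhile_neq_iff_less[OF \<open>sorted _\<close> ops(2)[OF assms(3)] ops(1)[OF assms(4)]] gp
    by (auto simp: sort_key_def max_def)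
  also have "Proc k \<in> set ?A \<longleftrightarrow> max (t k) (p k) < max (t j) (p j)"
    using mem_takeWhile_neq_iff_less[OF \<open>sorted _\<close> ops(2)[OF assms(3)] ops(2)[OF assms(4)]] gp
    by (auto simp: sort_key_def max_def)
  finally show ?thesis .
qed

lemma DD_commute: "DD J t p j k = DD J t p k j"
  by (simp add: DD_def)

lemma DD_eq_if_first_completed:
  assumes "finite J" and "general_position J t p" and "j \<in> J" "k \<in> J" "j \<noteq> k"
    and "max (t j) (p j) < max (t k) (p k)"
  shows "DD J t p j k = t j + p j + (if t k < max (t j) (p j) then t k else 0)"
  using assms dd_eq[OF assms(1-5)] dd_eq[OF assms(1,2,4,3) assms(5)[symmetric]]
  unfolding DD_def by auto

lemma DD_le_add_scaled_max:
  assumes "finite J" and "general_position J t p" and "j \<in> J" "k \<in> J" "j \<noteq> k"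
    and nonneg: "\<forall>i\<in>J. t i \<ge> 0 \<and> p i \<ge> 0" and "0 \<le> \<nu>" "\<nu> \<le> 1"
    and not_red: "\<not> (t k \<le> max (t j) (p j) \<and> \<nu> * max (t j) (p j) \<le> t k \<and> \<nu> * t k \<le> p k)"
  shows "DD J t p j k \<le> t j + p j + \<nu> * max (t j) (p j)"
proof -
  let ?m\<^sub>j = "max (t j) (p j)" and ?m\<^sub>k = "max (t k) (p k)"
  have "t j \<ge> 0" "p j \<ge> 0" "t k \<ge> 0" "p k \<ge> 0" using nonneg \<open>j \<in> J\<close> \<open>k \<in> J\<close> by auto
  have "t k \<noteq> t j" "t k \<noteq> p j" "p k \<noteq> t j" "p k \<noteq> p j"
    using assms(2-5) unfolding general_position_def by metis+
  then have "?m\<^sub>j \<noteq> ?m\<^sub>k" by (auto simp: max_def)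
  then consider (j_first) "?m\<^sub>j < ?m\<^sub>k" | (k_first) "?m\<^sub>k < ?m\<^sub>j"
    by linarith
  then show ?thesis
  proof cases
    case j_first
    have "(if t k < ?m\<^sub>j then t k else 0) \<le> \<nu> * ?m\<^sub>j"
    proof (cases "t k < ?m\<^sub>j")
      case True
      have "\<nu> * t k \<le> t k" using \<open>t k \<ge> 0\<close> \<open>0 \<le> \<nu>\<close> \<open>\<nu> \<le> 1\<close> by (rule mult_left_le_one_le)
      \<comment> \<open>otherwise \<open>p\<^sub>k < \<nu> t\<^sub>k \<le> t\<^sub>k < m\<^sub>j\<close>, so \<open>m\<^sub>k < m\<^sub>j\<close>\<close>
      then have "\<nu> * t k \<le> p k" using True j_first by linarith
      then show ?thesis using True not_red by simp
    qed (use \<open>t j \<ge> 0\<close> \<open>0 \<le> \<nu>\<close> in simp)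
    then show ?thesis
      using DD_eq_if_first_completed[OF assms(1-5) j_first] by linarith
  next
    case k_first
    have "t k \<le> ?m\<^sub>j" using k_first by linarith
    then have "\<nu> * t k \<le> \<nu> * ?m\<^sub>j" using \<open>0 \<le> \<nu>\<close> by (rule mult_left_mono)
    then have "t k < \<nu> * ?m\<^sub>j \<or> p k < \<nu> * ?m\<^sub>j" using \<open>t k \<le> ?m\<^sub>j\<close> not_red by auto
    then have "t k + p k \<le> \<nu> * ?m\<^sub>j + ?m\<^sub>k" by linarith
    moreover have "?m\<^sub>k + (if t j < ?m\<^sub>k then t j else 0) \<le> t j + p j"
      using k_first \<open>t j \<ge> 0\<close> \<open>p j \<ge> 0\<close> by (auto simp: max_def split: if_splits)
    moreover have "DD J t p j k = t k + p k + (if t j < ?m\<^sub>k then t j else 0)"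
      using DD_eq_if_first_completed[OF assms(1,2,4,3) assms(5)[symmetric] k_first] DD_commute
      by metis
    ultimately show ?thesis by linarith
  qed
qed

lemma DD_le_add_max:
  assumes "finite J" and "general_position J t p" and "j \<in> J" "k \<in> J" "j \<noteq> k"
    and "\<forall>i\<in>J. t i \<ge> 0 \<and> p i \<ge> 0"
  shows "DD J t p j k \<le> t j + p j + max (t j) (p j)"
proof -
  \<comment> \<open>for \<open>\<nu> = 1\<close> the excluded configuration would force \<open>t\<^sub>k = m\<^sub>j\<close>\<close>
  have "t k \<noteq> t j" "t k \<noteq> p j"
    using assms(2-5) unfolding general_position_def by metis+
  then have "\<not> (t k \<le> max (t j) (p j) \<and> 1 * max (t j) (p j) \<le> t k \<and> 1 * t k \<le> p k)"
    by (auto simp: max_def)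
  from DD_le_add_scaled_max[OF assms _ _ this] show ?thesis by simp
qed

lemma add_max_le_if_balanced:
  fixes a b \<mu> :: real
  assumes "a \<ge> 0" "b \<ge> 0" "\<mu> > 0" and "max a b < \<mu> * min a b"
  shows "a + b + max a b \<le> (2 * \<mu> + 1) / (\<mu> + 1) * (a + b)"
proof -
  have "max a b * (\<mu> + 1) \<le> \<mu> * (max a b + min a b)"
    using assms(4) by (simp add: algebra_simps)
  also have "max a b + min a b = a + b"
    by (simp add: max_def min_def)
  finally have "(a + b + max a b) * (\<mu> + 1) \<le> (2 * \<mu> + 1) * (a + b)"
    by (simp add: algebra_simps)
  then show ?thesis using assms(3) by (simp add: field_simps)
qed

theorem mainTheorem4:
  fixes J :: "'a set" and t p :: "'a \<Rightarrow> real" and \<mu> \<nu> :: real and j k :: 'a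
  assumes "finite J"
    and "\<forall>i\<in>J. t i \<ge> 0 \<and> p i \<ge> 0"
    and "general_position J t p"
    and "\<mu> > 1" and "0 < \<nu>" and "\<nu> < 1" and "\<mu> * \<nu> > 1"
    and "1 + 1 / \<mu> \<le> \<nu> + \<nu>\<^sup>2"
    and "j \<in> J" and "k \<in> J" and "j \<noteq> k"
    and "t j + p j < t k + p k"
    and "\<not> red_pair \<mu> \<nu> t p j k"
  shows "DD J t p j k \<le> max ((2 * \<mu> + 1) / (\<mu> + 1)) (1 + \<nu>) * min (t j + p j) (t k + p k)"
proof -
  let ?c = "max ((2 * \<mu> + 1) / (\<mu> + 1)) (1 + \<nu>)"
  have nonneg: "t j \<ge> 0" "p j \<ge> 0" using assms(2,9) by auto
  have "DD J t p j k \<le> ?c * (t j + p j)"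
  proof (cases "imbalanced \<mu> t p j")
    case False
    then have balanced: "max (t j) (p j) < \<mu> * min (t j) (p j)"
      unfolding imbalanced_def by linarith
    have "DD J t p j k \<le> t j + p j + max (t j) (p j)"
      using DD_le_add_max[OF assms(1,3,9,10,11,2)] .
    also have "\<dots> \<le> (2 * \<mu> + 1) / (\<mu> + 1) * (t j + p j)"
      using nonneg assms(4) balanced by (intro add_max_le_if_balanced) auto
    also have "\<dots> \<le> ?c * (t j + p j)"
      using nonneg by (intro mult_right_mono) auto
    finally show ?thesis .
  next
    case True
    then have "DD J t p j k \<le> t j + p j + \<nu> * max (t j) (p j)"
      using assms by (intro DD_le_add_scaled_max) (auto simp: red_pair_def)
    also have "\<dots> \<le> (1 + \<nu>) * (t j + p j)"
      using nonneg assms(5) by (simp add: algebra_simps max_def)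
    also have "\<dots> \<le> ?c * (t j + p j)"
      using nonneg by (intro mult_right_mono) auto
    finally show ?thesis .
  qed
  then show ?thesis using assms(12) by (simp add: min_def)
qed

end
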